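(* Let $\mathcal{M}=\{\nu_1,\dots,\nu_K\}$ be a finite set of probability measures on $\mathcal{A}^\infty$ ($\mathcal{A}$ finite or countable), and let $\varepsilon,\delta>0$. Consider the agent (Algorithm 1) that, using the uniform prior $w_\nu=1/K$ and Bayes mixture $\xi$, at each time step $t$ having observed $\omega_{<t}$ outputs $\xi(\cdot|\omega_{<t})$ if $\hat h_t(\omega_{<t})\le\varepsilon$ and outputs $\bot$ otherwise, then observes $\omega_t$. This agent is KWIK: for every $\mu\in\mathcal{M}$ it fails the run with $\mu$-probability at most $\delta$, and there is a finite number $B(\varepsilon,\delta)$ (depending also on $K$) such that, with $\mu$-probability at least $1-\delta$, it outputs $\bot$ at most $B(\varepsilon,\delta)$ times.
   Context: KWIK framework: the environment chooses an unknown $\mu\in\mathcal{M}$ and the sequence $\omega_1\omega_2\cdots$ is drawn from $\mu$. At each step $t$ the agent outputs either a predictive distribution $\rho(\cdot|\omega_{<t})$ on $\mathcal{A}$ or the symbol $\bot$; the run fails if the agent outputs $\rho$ with $h_{\omega_{<t}}(\rho,\mu)>\varepsilon$, otherwise $\omega_t$ is revealed and the run continues. Notation: $\mathcal{A}^\infty$ carries the $\sigma$-algebra generated by cylinders; $\rho(x):=\rho(\Gamma_x)$, $\rho(y|x):=\rho(xy)/\rho(x)$, $\omega_{<t}=\omega_1\cdots\omega_{t-1}$, $\rho_{<t}(\omega):=\rho(\omega_{<t})$. $\xi(A):=\frac1K\sum_{\nu\in\mathcal{M}}\nu(A)$. $h_x(\rho,\xi):=\sum_a(\sqrt{\rho(a|x)}-\sqrt{\xi(a|x)})^2$,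 $h_t(\nu,\xi)(\omega):=h_{\omega_{<t}}(\nu,\xi)$. With $w_\nu=1/K$ for all $\nu$, $\mathcal{M}_t:=\{\nu\in\mathcal{M}:\forall\tau\le t,\ \nu_{<\tau}/\xi_{<\tau}\ge\delta w_\mu/w_\nu\}=\{\nu:\forall\tau\le t,\ \nu_{<\tau}/\xi_{<\tau}\ge\delta\}$ and $\hat h_t:=\sup_{\nu\in\mathcal{M}_t}h_t(\nu,\xi)$. *)

theory Defs
  imports "HOL-Probability.Probability"
begin

text \<open>Measures live on the sequence space of the countable (possibly finite) alphabet 'a,
  i.e. on stream_space (count_space UNIV), whose sigma-algebra is generated by cylinders.\<close>

definition cyl :: "'a stream measure \<Rightarrow> 'a list \<Rightarrow> real" where
  "cyl \<nu> x = measure \<nu> {\<omega> \<in> space \<nu>. stake (length x) \<omega> = x}"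

definition mix :: "'a stream measure set \<Rightarrow> 'a list \<Rightarrow> real" where
  "mix M x = (\<Sum>\<nu>\<in>M. cyl \<nu> x) / real (card M)"

definition cond :: "('a list \<Rightarrow> real) \<Rightarrow> 'a list \<Rightarrow> 'a \<Rightarrow> real" where
  "cond f x a = f (x @ [a]) / f x"

definition hellinger :: "('a list \<Rightarrow> real) \<Rightarrow> ('a list \<Rightarrow> real) \<Rightarrow> 'a list \<Rightarrow> real" where
  "hellinger f g x = infsum (\<lambda>a. (sqrt (cond f x a) - sqrt (cond g x a))^2) UNIV"

text \<open>M_t for history omega_{<t} of length n = t-1: nu with nu_{<tau}/xi_{<tau} >= delta for all tau <= t,
  i.e. for all prefixes of length k <= n (uniform prior, so w_mu/w_nu = 1).\<close>
definition active :: "'a stream measure set \<Rightarrow> real \<Rightarrow> 'a stream \<Rightarrow> nat \<Rightarrow> 'a stream measure set" where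
  "active M \<delta> \<omega> n = {\<nu> \<in> M. \<forall>k\<le>n. cyl \<nu> (stake k \<omega>) / mix M (stake k \<omega>) \<ge> \<delta>}"

text \<open>hat h_t; the supremum of the (nonnegative) distances, with value 0 for an empty set.\<close>
definition hhat :: "'a stream measure set \<Rightarrow> real \<Rightarrow> 'a stream \<Rightarrow> nat \<Rightarrow> real" where
  "hhat M \<delta> \<omega> n = Sup (insert 0 ((\<lambda>\<nu>. hellinger (cyl \<nu>) (mix M) (stake n \<omega>)) ` active M \<delta> \<omega> n))"

definition abstains :: "'a stream measure set \<Rightarrow> real \<Rightarrow> real \<Rightarrow> 'a stream \<Rightarrow> nat \<Rightarrow> bool" where
  "abstains M \<epsilon> \<delta> \<omega> n \<longleftrightarrow> hhat M \<delta> \<omega> n > \<epsilon>"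

definition fails_at :: "'a stream measure set \<Rightarrow> real \<Rightarrow> real \<Rightarrow> 'a stream measure \<Rightarrow> 'a stream \<Rightarrow> nat \<Rightarrow> bool" where
  "fails_at M \<epsilon> \<delta> \<mu> \<omega> n \<longleftrightarrow>
     \<not> abstains M \<epsilon> \<delta> \<omega> n \<and> hellinger (mix M) (cyl \<mu>) (stake n \<omega>) > \<epsilon>"

definition run_fails :: "'a stream measure set \<Rightarrow> real \<Rightarrow> real \<Rightarrow> 'a stream measure \<Rightarrow> 'a stream \<Rightarrow> bool" where
  "run_fails M \<epsilon> \<delta> \<mu> \<omega> \<longleftrightarrow> (\<exists>n. fails_at M \<epsilon> \<delta> \<mu> \<omega> n)"

text \<open>Steps actually executed in the run (the run stops at the first failure) at which bot is output.\<close>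
definition bot_steps :: "'a stream measure set \<Rightarrow> real \<Rightarrow> real \<Rightarrow> 'a stream measure \<Rightarrow> 'a stream \<Rightarrow> nat set" where
  "bot_steps M \<epsilon> \<delta> \<mu> \<omega> = {n. (\<forall>m<n. \<not> fails_at M \<epsilon> \<delta> \<mu> \<omega> m) \<and> abstains M \<epsilon> \<delta> \<omega> n}"

end

theory Submission
  imports Defs
begin

text \<open>
  Call a model \<open>\<nu>\<close> plausible at a prefix \<open>x\<close> if \<open>\<nu>(x) \<ge> \<delta> \<xi>(x)\<close>; the active set at time \<open>t\<close>
  consists of the models that were plausible at every prefix so far. As long as the true \<open>\<mu>\<close> is
  active, \<open>h(\<xi>,\<mu>)\<close> is bounded by the statistic \<open>hhat\<close>, so the agent cannot fail. At the first
  prefix where \<open>\<mu>\<close> becomes implausible, \<open>\<mu>(x) \<le> \<delta> \<xi>(x)\<close>, and these first prefixes form disjoint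
  events of total \<open>\<xi>\<close>-mass at most 1; hence \<open>\<mu>\<close> ever becomes inactive with probability at most \<open>\<delta>\<close>.

  Every \<open>\<bottom>\<close> is caused by an active \<open>\<nu>\<close> with \<open>h(\<nu>,\<xi>) > \<epsilon>\<close>. For consistent cylinder functions
  \<open>\<Sum>\<^sub>a \<surd>(\<nu>(xa) \<xi>(xa)) = \<surd>(\<nu>(x) \<xi>(x)) (1 - h\<^sub>x(\<nu>,\<xi>)/2)\<close>, which telescopes to
  \<open>\<Sum>\<^sub>x \<surd>(\<nu>(x) \<xi>(x)) h\<^sub>x(\<nu>,\<xi>)/2 \<le> 1\<close>. Where \<open>\<nu>\<close> is plausible,
  \<open>\<mu>(x) \<le> K \<xi>(x) \<le> K \<surd>(\<nu>(x) \<xi>(x)) / \<surd>\<delta>\<close>, so the \<open>\<mu>\<close>-expected sum over all steps of the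
  Hellinger distances of plausible models is at most \<open>2K\<^sup>2/\<surd>\<delta>\<close>. Markov's inequality then gives
  at most \<open>2K\<^sup>2/(\<delta>\<^sup>3\<^sup>/\<^sup>2 \<epsilon>)\<close> outputs \<open>\<bottom>\<close> with probability at least \<open>1 - \<delta>\<close>.
\<close>

lemma finite_card_le_iff_card_lessThan:
  fixes A :: "nat set"
  shows "finite A \<and> card A \<le> B \<longleftrightarrow> (\<forall>N. card (A \<inter> {..<N}) \<le> B)"
proof
  assume "finite A \<and> card A \<le> B"
  then show "\<forall>N. card (A \<inter> {..<N}) \<le> B"
    by (meson card_mono inf_le1 le_trans)
next
  assume H: "\<forall>N. card (A \<inter> {..<N}) \<le> B"
  show "finite A \<and> card A \<le> B"
  proof (cases "finite A")
    case True
    then obtain k where "A \<subseteq> {..<k}" using finite_nat_iff_bounded by blast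
    then have "A \<inter> {..<k} = A" by auto
    then show ?thesis using H True by metis
  next
    case False
    then obtain F where F: "finite F" "card F = Suc B" "F \<subseteq> A"
      using infinite_arbitrarily_large by blast
    then obtain k where "F \<subseteq> {..<k}" using finite_nat_iff_bounded by blast
    then have "card F \<le> card (A \<inter> {..<k})" using F by (intro card_mono) auto
    then show ?thesis using H F by (metis Suc_n_not_le_n le_trans)
  qed
qed

definition first_hit :: "('a list \<Rightarrow> bool) \<Rightarrow> 'a list \<Rightarrow> bool" where
  "first_hit Q x \<longleftrightarrow> Q x \<and> (\<forall>j<length x. \<not> Q (take j x))"

lemma first_hit_stake:
  "first_hit Q (stake k \<omega>) \<longleftrightarrow> Q (stake k \<omega>) \<and> (\<forall>j<k. \<not> Q (stake j \<omega>))"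
  by (simp add: first_hit_def take_stake)

lemma Collect_ex_stake_eq_UN_first_hit:
  "{\<omega>. \<exists>k. Q (stake k \<omega>)} = (\<Union>k. {\<omega>. first_hit Q (stake k \<omega>)})"
proof (intro equalityI subsetI)
  fix \<omega> assume "\<omega> \<in> {\<omega>. \<exists>k. Q (stake k \<omega>)}"
  then have "\<exists>k. Q (stake k \<omega>)" by simp
  then have "first_hit Q (stake (LEAST k. Q (stake k \<omega>)) \<omega>)"
    unfolding first_hit_stake by (meson LeastI_ex not_less_Least)
  then show "\<omega> \<in> (\<Union>k. {\<omega>. first_hit Q (stake k \<omega>)})" by blast
qed (auto simp: first_hit_stake)

lemma disjoint_family_first_hit:
  "disjoint_family (\<lambda>k. {\<omega>. first_hit Q (stake k \<omega>)})"
  unfolding disjoint_family_on_def first_hit_stake by (auto, metis linorder_neqE_nat)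

lemma nn_integral_count_space_eq_infsum:
  fixes d :: "'b::countable \<Rightarrow> real"
  assumes "\<And>a. d a \<ge> 0" "(\<integral>\<^sup>+a. ennreal (d a) \<partial>count_space UNIV) < \<infinity>"
  shows "(\<integral>\<^sup>+a. ennreal (d a) \<partial>count_space UNIV) = ennreal (infsum d UNIV)"
proof -
  have "integrable (count_space UNIV) d"
    using assms by (subst integrable_iff_bounded) auto
  then have "Infinite_Set_Sum.abs_summable_on d UNIV"
    by (simp add: Infinite_Set_Sum.abs_summable_on_def)
  then show ?thesis
    using assms nn_integral_conv_infsetsum[of d UNIV] infsetsum_infsum[of d UNIV] by simp
qed

lemma nn_integral_count_space_length_Suc:
  fixes F :: "'a::countable list \<Rightarrow> ennreal"
  shows "(\<integral>\<^sup>+y. F y \<partial>count_space {y. length y = Suc n})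
       = (\<integral>\<^sup>+x. \<integral>\<^sup>+a. F (x @ [a]) \<partial>count_space UNIV \<partial>count_space {x. length x = n})"
proof -
  let ?A = "{x::'a list. length x = n}"
  have pair: "count_space ?A \<Otimes>\<^sub>M count_space (UNIV::'a set) = count_space (?A \<times> UNIV)"
    by (rule pair_measure_countable)
      (rule countable_subset[OF subset_UNIV countableI_type], rule countableI_type)
  have "inj_on (\<lambda>z. fst z @ [snd z]) (?A \<times> UNIV)"
    by (auto simp: inj_on_def)
  moreover have "(\<lambda>z. fst z @ [snd z]) ` (?A \<times> UNIV) = {y. length y = Suc n}"
  proof (intro equalityI subsetI)
    fix y :: "'a list" assume "y \<in> {y. length y = Suc n}"
    then obtain xs a where "y = xs @ [a]" "length xs = n" by (cases y rule: rev_cases) auto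
    then show "y \<in> (\<lambda>z. fst z @ [snd z]) ` (?A \<times> UNIV)"
      by (auto intro!: image_eqI[where x="(xs, a)"])
  qed auto
  ultimately have bij: "bij_betw (\<lambda>z. fst z @ [snd z]) (?A \<times> UNIV) {y. length y = Suc n}"
    by (simp add: bij_betw_def)
  have "(\<integral>\<^sup>+x. \<integral>\<^sup>+a. F (x @ [a]) \<partial>count_space UNIV \<partial>count_space ?A)
      = (\<integral>\<^sup>+z. F (fst z @ [snd z]) \<partial>count_space (?A \<times> UNIV))"
    using sigma_finite_measure.nn_integral_fst[OF sigma_finite_measure_count_space,
        of "\<lambda>z. F (fst z @ [snd z])" "count_space ?A"]
    by (simp add: pair)
  also have "\<dots> = (\<integral>\<^sup>+y. F y \<partial>count_space {y. length y = Suc n})"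
    by (rule nn_integral_bij_count_space[OF bij])
  finally show ?thesis by simp
qed

section \<open>Hellinger telescoping for consistent cylinder functions\<close>

definition kolmogorov_consistent :: "('a list \<Rightarrow> real) \<Rightarrow> bool" where
  "kolmogorov_consistent f \<longleftrightarrow> (\<forall>x. 0 \<le> f x) \<and>
     (\<forall>x. (\<integral>\<^sup>+a. ennreal (f (x @ [a])) \<partial>count_space UNIV) = ennreal (f x))"

lemma kolmogorov_consistent_nonneg: "kolmogorov_consistent f \<Longrightarrow> 0 \<le> f x"
  by (simp add: kolmogorov_consistent_def)

lemma kolmogorov_consistent_snoc_le:
  assumes "kolmogorov_consistent f"
  shows "f (x @ [a]) \<le> f x"
proof -
  have "ennreal (f (x @ [a])) \<le> ennreal (f x)"
    using nn_integral_ge_point[of a UNIV "\<lambda>a. ennreal (f (x @ [a]))"] assms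
    by (simp add: kolmogorov_consistent_def)
  then show ?thesis using assms by (simp add: kolmogorov_consistent_def ennreal_le_iff)
qed

lemma nn_integral_snoc_linear_combination:
  assumes f: "kolmogorov_consistent f" and g: "kolmogorov_consistent g" and "c \<ge> 0" "e \<ge> 0"
  shows "(\<integral>\<^sup>+a. ennreal (c * f (x @ [a]) + e * g (x @ [a])) \<partial>count_space UNIV)
       = ennreal (c * f x + e * g x)"
proof -
  have "(\<integral>\<^sup>+a. ennreal (c * f (x @ [a]) + e * g (x @ [a])) \<partial>count_space UNIV)
      = (\<integral>\<^sup>+a. ennreal c * ennreal (f (x @ [a])) + ennreal e * ennreal (g (x @ [a])) \<partial>count_space UNIV)"
    using assms kolmogorov_consistent_nonneg[OF f] kolmogorov_consistent_nonneg[OF g]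
    by (intro nn_integral_cong) (simp add: ennreal_mult ennreal_plus)
  also have "\<dots> = ennreal c * ennreal (f x) + ennreal e * ennreal (g x)"
    using f g by (simp add: nn_integral_add nn_integral_cmult kolmogorov_consistent_def)
  also have "\<dots> = ennreal (c * f x + e * g x)"
    using assms kolmogorov_consistent_nonneg[OF f] kolmogorov_consistent_nonneg[OF g]
    by (simp add: ennreal_mult ennreal_plus)
  finally show ?thesis .
qed

lemma hellinger_nonneg: "hellinger f g x \<ge> 0"
  by (simp add: hellinger_def infsum_nonneg)

lemma hellinger_commute: "hellinger f g x = hellinger g f x"
  unfolding hellinger_def by (simp add: power2_commute)

lemma ennreal_hellinger_eq_nn_integral:
  fixes f g :: "'a::countable list \<Rightarrow> real"
  assumes f: "kolmogorov_consistent f" and g: "kolmogorov_consistent g" and "f x > 0" "g x > 0"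
  shows "ennreal (hellinger f g x)
       = (\<integral>\<^sup>+a. ennreal ((sqrt (f (x @ [a]) / f x) - sqrt (g (x @ [a]) / g x))\<^sup>2) \<partial>count_space UNIV)"
proof -
  define d where "d a = (sqrt (f (x @ [a]) / f x) - sqrt (g (x @ [a]) / g x))\<^sup>2" for a
  have d_le: "d a \<le> 1 / f x * f (x @ [a]) + 1 / g x * g (x @ [a])" for a
  proof -
    have "f (x @ [a]) / f x \<ge> 0" "g (x @ [a]) / g x \<ge> 0"
      using assms kolmogorov_consistent_nonneg[OF f] kolmogorov_consistent_nonneg[OF g] by auto
    then show ?thesis
      unfolding d_def power2_diff by (simp add: real_sqrt_mult[symmetric])
  qed
  have "(\<integral>\<^sup>+a. ennreal (d a) \<partial>count_space UNIV)
      \<le> (\<integral>\<^sup>+a. ennreal (1 / f x * f (x @ [a]) + 1 / g x * g (x @ [a])) \<partial>count_space UNIV)"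
    using d_le by (intro nn_integral_mono ennreal_leI)
  also have "\<dots> = ennreal (1 / f x * f x + 1 / g x * g x)"
    using assms by (intro nn_integral_snoc_linear_combination) auto
  finally have "(\<integral>\<^sup>+a. ennreal (d a) \<partial>count_space UNIV) < \<infinity>"
    by (metis ennreal_less_top infinity_ennreal_def le_less_trans)
  moreover have "hellinger f g x = infsum d UNIV"
    by (simp add: hellinger_def cond_def d_def[abs_def])
  ultimately show ?thesis
    using nn_integral_count_space_eq_infsum[of d] by (simp add: d_def)
qed

lemma sqrt_mult_add_scaled_sqrt_diff_sq:
  fixes p q a b :: real
  assumes "p > 0" "q > 0" "a \<ge> 0" "b \<ge> 0"
  shows "sqrt (a * b) + sqrt (p * q) / 2 * (sqrt (a / p) - sqrt (b / q))\<^sup>2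
       = sqrt (q / p) / 2 * a + sqrt (p / q) / 2 * b"
proof -
  obtain P Q U V where PQ: "P > 0" "Q > 0" "U \<ge> 0" "V \<ge> 0"
    and eqs: "p = P\<^sup>2" "q = Q\<^sup>2" "a = P\<^sup>2 * U\<^sup>2" "b = Q\<^sup>2 * V\<^sup>2"
  proof
    show "sqrt p > 0" "sqrt q > 0" "sqrt (a / p) \<ge> 0" "sqrt (b / q) \<ge> 0"
      "p = (sqrt p)\<^sup>2" "q = (sqrt q)\<^sup>2"
      "a = (sqrt p)\<^sup>2 * (sqrt (a / p))\<^sup>2" "b = (sqrt q)\<^sup>2 * (sqrt (b / q))\<^sup>2"
      using assms by auto
  qed
  have roots: "sqrt (a * b) = P * Q * U * V" "sqrt (p * q) = P * Q" "sqrt (a / p) = U"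
    "sqrt (b / q) = V" "sqrt (q / p) = Q / P" "sqrt (p / q) = P / Q"
    using PQ by (simp_all add: eqs real_sqrt_mult real_sqrt_divide power_mult_distrib[symmetric])
  show ?thesis
    unfolding roots using PQ by (simp add: eqs field_simps power2_eq_square)
qed

lemma sqrt_divide_mult_self:
  fixes p q :: real
  assumes "p > 0" "q \<ge> 0"
  shows "sqrt (q / p) * p = sqrt (p * q)"
proof -
  have "sqrt (q / p) * p = sqrt (q / p) * sqrt (p\<^sup>2)" using assms by simp
  also have "\<dots> = sqrt (q / p * p\<^sup>2)" by (simp only: real_sqrt_mult)
  also have "q / p * p\<^sup>2 = p * q" using assms by (simp add: power2_eq_square)
  finally show ?thesis .
qed

lemma hellinger_step_degenerate:
  assumes f: "kolmogorov_consistent f" and g: "kolmogorov_consistent g" and "f x = 0 \<or> g x = 0"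
  shows "(\<integral>\<^sup>+a. ennreal (sqrt (f (x @ [a]) * g (x @ [a]))) \<partial>count_space UNIV)
           + ennreal (sqrt (f x * g x) * hellinger f g x / 2)
       = ennreal (sqrt (f x * g x))"
proof -
  have "f (x @ [a]) * g (x @ [a]) = 0" for a
    using assms(3) kolmogorov_consistent_snoc_le[OF f] kolmogorov_consistent_snoc_le[OF g]
      kolmogorov_consistent_nonneg[OF f] kolmogorov_consistent_nonneg[OF g]
    by (metis antisym mult_eq_0_iff)
  then have "(\<lambda>a. ennreal (sqrt (f (x @ [a]) * g (x @ [a])))) = (\<lambda>a. 0)"
    by (intro ext) (metis ennreal_0 real_sqrt_zero)
  with assms(3) show ?thesis by auto
qed

lemma hellinger_step_pos:
  fixes f g :: "'a::countable list \<Rightarrow> real"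
  assumes f: "kolmogorov_consistent f" and g: "kolmogorov_consistent g" and "f x > 0" "g x > 0"
  shows "(\<integral>\<^sup>+a. ennreal (sqrt (f (x @ [a]) * g (x @ [a]))) \<partial>count_space UNIV)
           + ennreal (sqrt (f x * g x) * hellinger f g x / 2)
       = ennreal (sqrt (f x * g x))"
proof -
  define p q where "p = f x" and "q = g x"
  have p: "p > 0" and q: "q > 0" using assms(3,4) by (simp_all add: p_def q_def)
  define d where "d a = (sqrt (f (x @ [a]) / p) - sqrt (g (x @ [a]) / q))\<^sup>2" for a
  have f0: "f y \<ge> 0" and g0: "g y \<ge> 0" for y
    using kolmogorov_consistent_nonneg[OF f] kolmogorov_consistent_nonneg[OF g] by auto
  have "ennreal (sqrt (p * q) * hellinger f g x / 2) = ennreal (sqrt (p * q) / 2 * hellinger f g x)"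
    by simp
  also have "\<dots> = ennreal (sqrt (p * q) / 2) * ennreal (hellinger f g x)"
    using hellinger_nonneg p q by (intro ennreal_mult) auto
  also have "\<dots> = ennreal (sqrt (p * q) / 2) * (\<integral>\<^sup>+a. ennreal (d a) \<partial>count_space UNIV)"
    using p q by (simp add: ennreal_hellinger_eq_nn_integral[OF f g] p_def q_def d_def)
  also have "\<dots> = (\<integral>\<^sup>+a. ennreal (sqrt (p * q) / 2 * d a) \<partial>count_space UNIV)"
    using p q by (subst nn_integral_cmult[symmetric])
      (auto intro!: nn_integral_cong simp: ennreal_mult[symmetric] d_def)
  finally have hell: "ennreal (sqrt (p * q) * hellinger f g x / 2)
      = (\<integral>\<^sup>+a. ennreal (sqrt (p * q) / 2 * d a) \<partial>count_space UNIV)" .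
  have "(\<integral>\<^sup>+a. ennreal (sqrt (f (x @ [a]) * g (x @ [a]))) \<partial>count_space UNIV)
        + ennreal (sqrt (p * q) * hellinger f g x / 2)
      = (\<integral>\<^sup>+a. ennreal (sqrt (f (x @ [a]) * g (x @ [a])) + sqrt (p * q) / 2 * d a)
           \<partial>count_space UNIV)"
    unfolding hell using p q f0 g0
    by (subst nn_integral_add[symmetric]) (auto intro!: nn_integral_cong simp: d_def ennreal_plus)
  also have "\<dots> = (\<integral>\<^sup>+a. ennreal (sqrt (q / p) / 2 * f (x @ [a]) + sqrt (p / q) / 2 * g (x @ [a]))
                     \<partial>count_space UNIV)"
    using sqrt_mult_add_scaled_sqrt_diff_sq[OF p q f0 g0] by (simp add: d_def)
  also have "\<dots> = ennreal (sqrt (q / p) / 2 * p + sqrt (p / q) / 2 * q)"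
    using p q unfolding p_def q_def by (intro nn_integral_snoc_linear_combination f g) auto
  also have "sqrt (q / p) / 2 * p + sqrt (p / q) / 2 * q = sqrt (p * q)"
    using sqrt_divide_mult_self[of p q] sqrt_divide_mult_self[of q p] p q
    by (simp add: mult.commute)
  finally show ?thesis by (simp add: p_def q_def)
qed

lemma hellinger_step:
  fixes f g :: "'a::countable list \<Rightarrow> real"
  assumes f: "kolmogorov_consistent f" and g: "kolmogorov_consistent g"
  shows "(\<integral>\<^sup>+a. ennreal (sqrt (f (x @ [a]) * g (x @ [a]))) \<partial>count_space UNIV)
           + ennreal (sqrt (f x * g x) * hellinger f g x / 2)
       = ennreal (sqrt (f x * g x))"
proof (cases "f x > 0 \<and> g x > 0")
  case False
  then have "f x = 0 \<or> g x = 0"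
    using kolmogorov_consistent_nonneg[OF f, of x] kolmogorov_consistent_nonneg[OF g, of x]
    by (metis le_less)
  then show ?thesis by (rule hellinger_step_degenerate[OF f g])
qed (simp add: hellinger_step_pos[OF f g])

lemma hellinger_telescope:
  fixes f g :: "'a::countable list \<Rightarrow> real"
  assumes f: "kolmogorov_consistent f" and g: "kolmogorov_consistent g"
  shows "(\<Sum>n. \<integral>\<^sup>+x. ennreal (sqrt (f x * g x) * hellinger f g x / 2) \<partial>count_space {x. length x = n})
       \<le> ennreal (sqrt (f [] * g []))"
proof -
  define T where "T n = (\<integral>\<^sup>+x. ennreal (sqrt (f x * g x)) \<partial>count_space {x. length x = n})" for n
  define D where
    "D n = (\<integral>\<^sup>+x. ennreal (sqrt (f x * g x) * hellinger f g x / 2) \<partial>count_space {x. length x = n})" for n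
  have T_Suc: "T (Suc n) + D n = T n" for n
  proof -
    have "T (Suc n)
        = (\<integral>\<^sup>+x. \<integral>\<^sup>+a. ennreal (sqrt (f (x @ [a]) * g (x @ [a]))) \<partial>count_space UNIV
             \<partial>count_space {x. length x = n})"
      unfolding T_def by (rule nn_integral_count_space_length_Suc)
    then have "T (Suc n) + D n
        = (\<integral>\<^sup>+x. (\<integral>\<^sup>+a. ennreal (sqrt (f (x @ [a]) * g (x @ [a]))) \<partial>count_space UNIV)
             + ennreal (sqrt (f x * g x) * hellinger f g x / 2) \<partial>count_space {x. length x = n})"
      unfolding D_def by (simp add: nn_integral_add)
    also have "\<dots> = T n"
      unfolding T_def by (intro nn_integral_cong hellinger_step f g)
    finally show ?thesis .
  qed
  have T_0: "T 0 = ennreal (sqrt (f [] * g []))"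
  proof -
    have "{x::'a list. length x = 0} = {[]}" by auto
    then show ?thesis unfolding T_def by (simp add: nn_integral_count_space_finite)
  qed
  have "T n + (\<Sum>k<n. D k) = T 0" for n
  proof (induction n)
    case (Suc n)
    have "T (Suc n) + (\<Sum>k<Suc n. D k) = (T (Suc n) + D n) + (\<Sum>k<n. D k)"
      by (simp add: add_ac)
    then show ?case using Suc T_Suc by simp
  qed simp
  then have "(\<Sum>k<n. D k) \<le> T 0" for n
    by (metis add.commute le_iff_add)
  then have "suminf D \<le> T 0" by (intro suminf_le_const) auto
  then show ?thesis unfolding D_def[abs_def] T_0 .
qed

section \<open>Dependence on the observed prefix\<close>

lemma stake_eq_if_stake_eq_le:
  assumes "stake n \<omega> = stake n \<omega>'" "k \<le> n"
  shows "stake k \<omega> = stake k \<omega>'"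
  by (metis assms min.absorb1 take_stake)

lemma active_cong_stake:
  assumes "stake n \<omega> = stake n \<omega>'"
  shows "active M \<delta> \<omega> n = active M \<delta> \<omega>' n"
  unfolding active_def by (simp add: stake_eq_if_stake_eq_le[OF assms])

lemma abstains_cong_stake:
  assumes "stake n \<omega> = stake n \<omega>'"
  shows "abstains M \<epsilon> \<delta> \<omega> n = abstains M \<epsilon> \<delta> \<omega>' n"
  unfolding abstains_def hhat_def active_cong_stake[OF assms] assms ..

lemma fails_at_cong_stake:
  assumes "stake n \<omega> = stake n \<omega>'"
  shows "fails_at M \<epsilon> \<delta> \<mu> \<omega> n = fails_at M \<epsilon> \<delta> \<mu> \<omega>' n"
  unfolding fails_at_def abstains_cong_stake[OF assms] assms ..

lemma bot_steps_lessThan_cong_stake: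
  assumes "stake N \<omega> = stake N \<omega>'"
  shows "bot_steps M \<epsilon> \<delta> \<mu> \<omega> \<inter> {..<N} = bot_steps M \<epsilon> \<delta> \<mu> \<omega>' \<inter> {..<N}"
proof -
  have "stake n \<omega> = stake n \<omega>'" if "n < N" for n
    using stake_eq_if_stake_eq_le[OF assms] that by simp
  then have "fails_at M \<epsilon> \<delta> \<mu> \<omega> m = fails_at M \<epsilon> \<delta> \<mu> \<omega>' m"
    and "abstains M \<epsilon> \<delta> \<omega> m = abstains M \<epsilon> \<delta> \<omega>' m" if "m < N" for m
    using that fails_at_cong_stake abstains_cong_stake by blast+
  then show ?thesis
    unfolding bot_steps_def by (auto dest: order.strict_trans)
qed

section \<open>Probability measures on sequence space\<close>

lemma cyl_nonneg: "cyl \<nu> x \<ge> 0"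
  by (simp add: cyl_def)

locale stream_prob_space = prob_space P for P :: "'a::countable stream measure" +
  assumes sets_eq_stream_space: "sets P = sets (stream_space (count_space UNIV))"
begin

lemma space_eq_UNIV [simp]: "space P = UNIV"
  using sets_eq_imp_space_eq[OF sets_eq_stream_space] by (simp add: space_stream_space)

lemma measurable_stake_P [measurable]: "stake n \<in> measurable P (count_space UNIV)"
  using measurable_stake measurable_cong_sets[OF sets_eq_stream_space refl] by blast

lemma sets_Collect_stake: "{\<omega>\<in>space P. Q (stake n \<omega>)} \<in> sets P"
proof -
  have "{\<omega>\<in>space P. Q (stake n \<omega>)} = stake n -` {x. Q x} \<inter> space P" by auto
  also have "\<dots> \<in> sets P" by (rule measurable_sets[OF measurable_stake_P]) auto
  finally show ?thesis .
qed

lemma sets_cylinder [measurable]: "{\<omega>. stake n \<omega> = x} \<in> sets P"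
  using sets_Collect_stake[of "\<lambda>y. y = x" n] by simp

lemma sets_Collect_stake_determined:
  assumes "\<And>\<omega> \<omega>'. stake n \<omega> = stake n \<omega>' \<Longrightarrow> Q \<omega> = Q \<omega>'"
  shows "{\<omega>\<in>space P. Q \<omega>} \<in> sets P"
proof -
  have "{\<omega>\<in>space P. Q \<omega>} = {\<omega>\<in>space P. \<exists>\<omega>'. stake n \<omega>' = stake n \<omega> \<and> Q \<omega>'}"
    using assms by blast
  then show ?thesis using sets_Collect_stake[of "\<lambda>x. \<exists>\<omega>'. stake n \<omega>' = x \<and> Q \<omega>'" n] by simp
qed

lemma emeasure_cylinder: "emeasure P {\<omega>. stake (length x) \<omega> = x} = cyl P x"
  unfolding cyl_def by (simp add: emeasure_eq_measure)

lemma cyl_Nil: "cyl P [] = 1"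
  using prob_space by (simp add: cyl_def)

lemma nn_integral_stake:
  "(\<integral>\<^sup>+\<omega>. f (stake n \<omega>) \<partial>P)
     = (\<integral>\<^sup>+x. emeasure P {\<omega>. stake n \<omega> = x} * f x \<partial>count_space UNIV)"
proof -
  have "distr P (count_space UNIV) (stake n)
      = density (count_space UNIV) (\<lambda>x. emeasure P {\<omega>. stake n \<omega> = x})"
  proof (rule measure_eqI_countable)
    fix x :: "'a list"
    have "emeasure (distr P (count_space UNIV) (stake n)) {x} = emeasure P {\<omega>. stake n \<omega> = x}"
      by (subst emeasure_distr) (auto intro!: arg_cong[where f="emeasure P"])
    then show "emeasure (distr P (count_space UNIV) (stake n)) {x}
             = emeasure (density (count_space UNIV) (\<lambda>x. emeasure P {\<omega>. stake n \<omega> = x})) {x}"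
      by (simp add: emeasure_density)
  qed auto
  moreover have "(\<integral>\<^sup>+\<omega>. f (stake n \<omega>) \<partial>P) = (\<integral>\<^sup>+x. f x \<partial>distr P (count_space UNIV) (stake n))"
    by (simp add: nn_integral_distr)
  ultimately show ?thesis by (simp add: nn_integral_density)
qed

lemma emeasure_Collect_stake:
  "emeasure P {\<omega>. Q (stake n \<omega>)}
     = (\<integral>\<^sup>+x. emeasure P {\<omega>. stake n \<omega> = x} * indicator (Collect Q) x \<partial>count_space UNIV)"
proof -
  have "emeasure P {\<omega>. Q (stake n \<omega>)} = (\<integral>\<^sup>+\<omega>. indicator (Collect Q) (stake n \<omega>) \<partial>P)"
    using sets_Collect_stake[of Q n] by (simp add: indicator_def nn_integral_indicator[symmetric])
  then show ?thesis by (simp add: nn_integral_stake)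
qed

lemma kolmogorov_consistent_cyl: "kolmogorov_consistent (cyl P)"
  unfolding kolmogorov_consistent_def
proof (intro conjI allI)
  fix x :: "'a list"
  show "0 \<le> cyl P x" by (rule cyl_nonneg)
  have "(\<Union>a. {\<omega>. stake (Suc (length x)) \<omega> = x @ [a]}) = {\<omega>. stake (length x) \<omega> = x}"
    by (auto simp: stake_Suc simp del: stake.simps)
  moreover have "emeasure P (\<Union>a. {\<omega>. stake (Suc (length x)) \<omega> = x @ [a]})
      = (\<integral>\<^sup>+a. emeasure P {\<omega>. stake (Suc (length x)) \<omega> = x @ [a]} \<partial>count_space UNIV)"
    by (rule emeasure_UN_countable, rule sets_cylinder)
      (auto simp: disjoint_family_on_def stake_Suc simp del: stake.simps)
  moreover have "emeasure P {\<omega>. stake (Suc (length x)) \<omega> = x @ [a]} = cyl P (x @ [a])" for a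
    using emeasure_cylinder[of "x @ [a]"] by simp
  ultimately show "(\<integral>\<^sup>+a. ennreal (cyl P (x @ [a])) \<partial>count_space UNIV) = ennreal (cyl P x)"
    using emeasure_cylinder[of x] by simp
qed

lemma sets_Collect_run_fails: "{\<omega> \<in> space P. run_fails M \<epsilon> \<delta> \<mu> \<omega>} \<in> sets P"
  unfolding run_fails_def
  by (intro sets.sets_Collect_countable_Ex sets_Collect_stake_determined fails_at_cong_stake)

lemma sets_Collect_card_bot_steps_le:
  "{\<omega> \<in> space P. finite (bot_steps M \<epsilon> \<delta> \<mu> \<omega>) \<and> card (bot_steps M \<epsilon> \<delta> \<mu> \<omega>) \<le> B} \<in> sets P"
  unfolding finite_card_le_iff_card_lessThan
proof (rule sets.sets_Collect_countable_All)
  fix N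
  show "{\<omega> \<in> space P. card (bot_steps M \<epsilon> \<delta> \<mu> \<omega> \<inter> {..<N}) \<le> B} \<in> sets P"
  proof (rule sets_Collect_stake_determined)
    fix \<omega> \<omega>' :: "'a stream"
    assume "stake N \<omega> = stake N \<omega>'"
    from bot_steps_lessThan_cong_stake[OF this]
    show "(card (bot_steps M \<epsilon> \<delta> \<mu> \<omega> \<inter> {..<N}) \<le> B)
        = (card (bot_steps M \<epsilon> \<delta> \<mu> \<omega>' \<inter> {..<N}) \<le> B)"
      by simp
  qed
qed

end

section \<open>Uniform Bayes mixtures of finitely many models\<close>

locale uniform_mixture =
  fixes M :: "'a::countable stream measure set"
  assumes finite_M: "finite M" and M_nonempty: "M \<noteq> {}"
    and stream_prob_space_M: "\<nu> \<in> M \<Longrightarrow> stream_prob_space \<nu>"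
begin

lemma card_M_pos: "real (card M) > 0"
  using finite_M M_nonempty by (simp add: card_gt_0_iff)

lemma mix_nonneg: "mix M x \<ge> 0"
  by (simp add: mix_def sum_nonneg cyl_nonneg)

lemma mix_Nil: "mix M [] = 1"
  using card_M_pos by (simp add: mix_def stream_prob_space.cyl_Nil[OF stream_prob_space_M])

lemma ennreal_mix: "ennreal (mix M x) = ennreal (1 / card M) * (\<Sum>\<nu>\<in>M. ennreal (cyl \<nu> x))"
  by (simp add: mix_def ennreal_mult[symmetric] sum_nonneg cyl_nonneg)

lemma kolmogorov_consistent_mix: "kolmogorov_consistent (mix M)"
  unfolding kolmogorov_consistent_def
proof (intro conjI allI)
  fix x :: "'a list"
  show "0 \<le> mix M x" by (rule mix_nonneg)
  have "(\<integral>\<^sup>+a. (\<Sum>\<nu>\<in>M. ennreal (cyl \<nu> (x @ [a]))) \<partial>count_space UNIV) = (\<Sum>\<nu>\<in>M. ennreal (cyl \<nu> x))"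
    using stream_prob_space.kolmogorov_consistent_cyl[OF stream_prob_space_M]
    by (simp add: nn_integral_sum kolmogorov_consistent_def del: sum_ennreal)
  then show "(\<integral>\<^sup>+a. ennreal (mix M (x @ [a])) \<partial>count_space UNIV) = ennreal (mix M x)"
    unfolding ennreal_mix by (simp add: nn_integral_cmult)
qed

lemma cyl_le_card_mult_mix:
  assumes "\<mu> \<in> M"
  shows "cyl \<mu> x \<le> card M * mix M x"
proof -
  have "cyl \<mu> x \<le> (\<Sum>\<nu>\<in>M. cyl \<nu> x)"
    using assms finite_M by (intro member_le_sum) (auto simp: cyl_nonneg)
  then show ?thesis using card_M_pos by (simp add: mix_def)
qed

definition plausible :: "real \<Rightarrow> 'a stream measure \<Rightarrow> 'a list \<Rightarrow> bool" where
  "plausible \<delta> \<nu> x \<longleftrightarrow> \<delta> \<le> cyl \<nu> x / mix M x"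

lemma active_eq_plausible:
  "active M \<delta> \<omega> n = {\<nu>\<in>M. \<forall>k\<le>n. plausible \<delta> \<nu> (stake k \<omega>)}"
  by (simp add: active_def plausible_def)

text \<open>Where \<open>\<xi>(x) = 0\<close>, division by zero makes every model implausible; there \<open>\<mu>(x) = 0\<close> too.\<close>

lemma cyl_le_if_not_plausible:
  assumes "\<mu> \<in> M" "\<not> plausible \<delta> \<mu> x"
  shows "cyl \<mu> x \<le> \<delta> * mix M x"
proof (cases "mix M x = 0")
  case True
  then show ?thesis using cyl_le_card_mult_mix[OF assms(1), of x] by simp
next
  case False
  then have "mix M x > 0" using mix_nonneg[of x] by simp
  then show ?thesis using assms(2) by (simp add: plausible_def pos_divide_less_eq not_le)
qed

lemma emeasure_Collect_stake_le_mixture: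
  assumes "\<mu> \<in> M" "c \<ge> 0" and le: "\<And>x. length x = k \<Longrightarrow> Q x \<Longrightarrow> cyl \<mu> x \<le> c * mix M x"
  shows "emeasure \<mu> {\<omega>. Q (stake k \<omega>)}
       \<le> ennreal (c / card M) * (\<Sum>\<nu>\<in>M. emeasure \<nu> {\<omega>. Q (stake k \<omega>)})"
proof -
  have cyl_eq: "emeasure \<nu> {\<omega>. stake k \<omega> = x} = cyl \<nu> x" if "\<nu> \<in> M" "length x = k" for \<nu> x
    using stream_prob_space.emeasure_cylinder[OF stream_prob_space_M[OF that(1)], of x] that(2)
    by simp
  have "emeasure \<mu> {\<omega>. stake k \<omega> = x} * indicator (Collect Q) x
      \<le> ennreal (c / card M) * (\<Sum>\<nu>\<in>M. emeasure \<nu> {\<omega>. stake k \<omega> = x} * indicator (Collect Q) x)"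
    for x :: "'a list"
  proof (cases "length x = k \<and> Q x")
    case True
    have "ennreal (cyl \<mu> x) \<le> ennreal (c * mix M x)" using le True by (intro ennreal_leI) auto
    also have "\<dots> = ennreal (c / card M) * (\<Sum>\<nu>\<in>M. ennreal (cyl \<nu> x))"
      using \<open>c \<ge> 0\<close> mix_nonneg
      by (simp add: ennreal_mult ennreal_mix mult.assoc[symmetric] ennreal_mult[symmetric] del: sum_ennreal)
    finally show ?thesis using True assms(1) cyl_eq by (simp cong: sum.cong)
  next
    case False
    then have "{\<omega>. stake k \<omega> = x} = {} \<or> \<not> Q x" by auto
    then show ?thesis by auto
  qed
  then have "emeasure \<mu> {\<omega>. Q (stake k \<omega>)}
      \<le> (\<integral>\<^sup>+x. ennreal (c / card M)
            * (\<Sum>\<nu>\<in>M. emeasure \<nu> {\<omega>. stake k \<omega> = x} * indicator (Collect Q) x) \<partial>count_space UNIV)"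
    unfolding stream_prob_space.emeasure_Collect_stake[OF stream_prob_space_M[OF assms(1)]]
    by (intro nn_integral_mono)
  also have "\<dots> = ennreal (c / card M) * (\<Sum>\<nu>\<in>M. emeasure \<nu> {\<omega>. Q (stake k \<omega>)})"
    by (simp add: nn_integral_cmult nn_integral_sum
        stream_prob_space.emeasure_Collect_stake[OF stream_prob_space_M])
  finally show ?thesis .
qed

lemma emeasure_eventually_implausible_le:
  assumes "\<mu> \<in> M" "\<delta> > 0"
  shows "emeasure \<mu> {\<omega>. \<exists>k. \<not> plausible \<delta> \<mu> (stake k \<omega>)} \<le> \<delta>"
proof -
  define F where "F k = {\<omega>. first_hit (\<lambda>x. \<not> plausible \<delta> \<mu> x) (stake k \<omega>)}" for k
  have F_sets: "F k \<in> sets \<nu>" if "\<nu> \<in> M" for \<nu> k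
    using stream_prob_space.sets_Collect_stake[OF stream_prob_space_M[OF that]]
      stream_prob_space.space_eq_UNIV[OF stream_prob_space_M[OF that]]
    by (simp add: F_def)
  have F_disj: "disjoint_family F"
    unfolding F_def by (rule disjoint_family_first_hit)
  have "emeasure \<mu> {\<omega>. \<exists>k. \<not> plausible \<delta> \<mu> (stake k \<omega>)} = emeasure \<mu> (\<Union>k. F k)"
    unfolding F_def Collect_ex_stake_eq_UN_first_hit[of "\<lambda>x. \<not> plausible \<delta> \<mu> x"] ..
  also have "\<dots> = (\<Sum>k. emeasure \<mu> (F k))"
    using F_sets[OF assms(1)] F_disj by (intro suminf_emeasure[symmetric]) auto
  also have "\<dots> \<le> (\<Sum>k. ennreal (\<delta> / card M) * (\<Sum>\<nu>\<in>M. emeasure \<nu> (F k)))"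
    unfolding F_def using assms
    by (intro suminf_le emeasure_Collect_stake_le_mixture cyl_le_if_not_plausible)
      (auto simp: first_hit_def)
  also have "\<dots> = ennreal (\<delta> / card M) * (\<Sum>\<nu>\<in>M. \<Sum>k. emeasure \<nu> (F k))"
    by (simp add: suminf_sum)
  also have "\<dots> = ennreal (\<delta> / card M) * (\<Sum>\<nu>\<in>M. emeasure \<nu> (\<Union>k. F k))"
    using F_sets F_disj by (intro arg_cong[where f="(*) _"] sum.cong refl suminf_emeasure) auto
  also have "\<dots> \<le> ennreal (\<delta> / card M) * (\<Sum>\<nu>\<in>M. 1)"
    using stream_prob_space_M
    by (intro mult_left_mono sum_mono) (auto simp: stream_prob_space_def prob_space.emeasure_le_1)
  also have "\<dots> = \<delta>"
    using card_M_pos assms(2) by (simp add: ennreal_of_nat_eq_real_of_nat ennreal_mult[symmetric])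
  finally show ?thesis .
qed

definition gated_hellinger :: "real \<Rightarrow> 'a stream measure \<Rightarrow> 'a list \<Rightarrow> real" where
  "gated_hellinger \<delta> \<nu> x = (if plausible \<delta> \<nu> x then hellinger (cyl \<nu>) (mix M) x else 0)"

lemma gated_hellinger_nonneg: "gated_hellinger \<delta> \<nu> x \<ge> 0"
  by (simp add: gated_hellinger_def hellinger_nonneg)

lemma cyl_mult_gated_hellinger_le:
  assumes "\<mu> \<in> M" "\<delta> > 0"
  shows "cyl \<mu> x * gated_hellinger \<delta> \<nu> x
       \<le> 2 * real (card M) / sqrt \<delta> * (sqrt (cyl \<nu> x * mix M x) * hellinger (cyl \<nu>) (mix M) x / 2)"
proof (cases "plausible \<delta> \<nu> x")
  case True
  let ?h = "hellinger (cyl \<nu>) (mix M) x"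
  have "mix M x > 0"
    using True assms(2) mix_nonneg[of x] by (cases "mix M x = 0") (auto simp: plausible_def)
  then have "\<delta> * mix M x \<le> cyl \<nu> x" using True by (simp add: plausible_def le_divide_eq)
  then have "sqrt (\<delta> * mix M x * mix M x) \<le> sqrt (cyl \<nu> x * mix M x)"
    using \<open>mix M x > 0\<close> by (intro real_sqrt_le_mono mult_right_mono) auto
  moreover have "sqrt (\<delta> * mix M x * mix M x) = sqrt \<delta> * mix M x"
    using \<open>mix M x > 0\<close> assms(2) by (simp add: real_sqrt_mult)
  ultimately have "sqrt \<delta> * mix M x \<le> sqrt (cyl \<nu> x * mix M x)"
    by simp
  then have "card M / sqrt \<delta> * (sqrt \<delta> * mix M x) \<le> card M / sqrt \<delta> * sqrt (cyl \<nu> x * mix M x)"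
    using assms(2) by (intro mult_left_mono) auto
  then have "card M * mix M x \<le> card M / sqrt \<delta> * sqrt (cyl \<nu> x * mix M x)"
    using assms(2) by simp
  then have "cyl \<mu> x * ?h \<le> card M / sqrt \<delta> * sqrt (cyl \<nu> x * mix M x) * ?h"
    using cyl_le_card_mult_mix[OF assms(1), of x] hellinger_nonneg
    by (meson mult_right_mono order_trans)
  then show ?thesis using True by (simp add: gated_hellinger_def)
next
  case False
  then show ?thesis
    using card_M_pos assms hellinger_nonneg[of "cyl \<nu>" "mix M" x] mix_nonneg[of x] cyl_nonneg[of \<nu> x]
    by (simp add: gated_hellinger_def)
qed

lemma nn_integral_gated_hellinger_stake_le:
  assumes "\<mu> \<in> M" "\<delta> > 0"
  shows "(\<integral>\<^sup>+\<omega>. ennreal (gated_hellinger \<delta> \<nu> (stake n \<omega>)) \<partial>\<mu>)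
       \<le> ennreal (2 * real (card M) / sqrt \<delta>)
         * (\<integral>\<^sup>+x. ennreal (sqrt (cyl \<nu> x * mix M x) * hellinger (cyl \<nu>) (mix M) x / 2)
              \<partial>count_space {x. length x = n})"
proof -
  interpret \<mu>: stream_prob_space \<mu> using stream_prob_space_M assms(1) .
  define s where "s x = sqrt (cyl \<nu> x * mix M x) * hellinger (cyl \<nu>) (mix M) x / 2" for x
  define c where "c = 2 * real (card M) / sqrt \<delta>"
  have s_nonneg: "s x \<ge> 0" for x
    using hellinger_nonneg[of "cyl \<nu>" "mix M" x] cyl_nonneg[of \<nu> x] mix_nonneg[of x]
    by (simp add: s_def)
  have c_nonneg: "c \<ge> 0" using assms(2) by (simp add: c_def)
  have "emeasure \<mu> {\<omega>. stake n \<omega> = x} * ennreal (gated_hellinger \<delta> \<nu> x)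
      \<le> c * (ennreal (s x) * indicator {x. length x = n} x)" for x
  proof (cases "length x = n")
    case True
    have "ennreal (cyl \<mu> x * gated_hellinger \<delta> \<nu> x) \<le> ennreal (c * s x)"
      using cyl_mult_gated_hellinger_le[OF assms] by (intro ennreal_leI) (simp add: c_def s_def)
    then show ?thesis
      using True \<mu>.emeasure_cylinder[of x] c_nonneg s_nonneg
      by (simp add: ennreal_mult gated_hellinger_nonneg cyl_nonneg)
  next
    case False
    then have "{\<omega>. stake n \<omega> = x} = {}" by auto
    then show ?thesis by simp
  qed
  then have "(\<integral>\<^sup>+x. emeasure \<mu> {\<omega>. stake n \<omega> = x} * ennreal (gated_hellinger \<delta> \<nu> x) \<partial>count_space UNIV)
      \<le> (\<integral>\<^sup>+x. c * (ennreal (s x) * indicator {x. length x = n} x) \<partial>count_space UNIV)"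
    by (intro nn_integral_mono)
  then show ?thesis
    unfolding \<mu>.nn_integral_stake[of "\<lambda>x. ennreal (gated_hellinger \<delta> \<nu> x)"]
    by (simp add: nn_integral_count_space_indicator nn_integral_cmult c_def s_def)
qed

lemma suminf_nn_integral_gated_hellinger_le:
  assumes "\<mu> \<in> M" "\<nu> \<in> M" "\<delta> > 0"
  shows "(\<Sum>n. \<integral>\<^sup>+\<omega>. ennreal (gated_hellinger \<delta> \<nu> (stake n \<omega>)) \<partial>\<mu>)
       \<le> ennreal (2 * real (card M) / sqrt \<delta>)"
proof -
  have "(\<Sum>n. \<integral>\<^sup>+\<omega>. ennreal (gated_hellinger \<delta> \<nu> (stake n \<omega>)) \<partial>\<mu>)
      \<le> (\<Sum>n. ennreal (2 * real (card M) / sqrt \<delta>)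
             * (\<integral>\<^sup>+x. ennreal (sqrt (cyl \<nu> x * mix M x) * hellinger (cyl \<nu>) (mix M) x / 2)
                  \<partial>count_space {x. length x = n}))"
    by (intro suminf_le nn_integral_gated_hellinger_stake_le assms) auto
  also have "\<dots> \<le> ennreal (2 * real (card M) / sqrt \<delta>) * ennreal (sqrt (cyl \<nu> [] * mix M []))"
    unfolding ennreal_suminf_cmult
    by (intro mult_left_mono hellinger_telescope kolmogorov_consistent_mix
        stream_prob_space.kolmogorov_consistent_cyl stream_prob_space_M assms(2)) auto
  also have "sqrt (cyl \<nu> [] * mix M []) = 1"
    using assms(2) by (simp add: mix_Nil stream_prob_space.cyl_Nil[OF stream_prob_space_M])
  finally show ?thesis by simp
qed

lemma finite_active: "finite (active M \<delta> \<omega> n)"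
  using finite_M by (rule rev_finite_subset) (auto simp: active_def)

lemma hellinger_le_hhat:
  "\<nu> \<in> active M \<delta> \<omega> n \<Longrightarrow> hellinger (cyl \<nu>) (mix M) (stake n \<omega>) \<le> hhat M \<delta> \<omega> n"
  unfolding hhat_def using finite_active by (intro cSup_upper) (auto intro: bdd_above_finite)

lemma hhat_gt_imp_active_hellinger_gt:
  assumes "\<epsilon> \<ge> 0" "hhat M \<delta> \<omega> n > \<epsilon>"
  shows "\<exists>\<nu>\<in>active M \<delta> \<omega> n. hellinger (cyl \<nu>) (mix M) (stake n \<omega>) > \<epsilon>"
proof -
  let ?X = "insert 0 ((\<lambda>\<nu>. hellinger (cyl \<nu>) (mix M) (stake n \<omega>)) ` active M \<delta> \<omega> n)"
  have "finite ?X" using finite_active by simp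
  then have "hhat M \<delta> \<omega> n \<in> ?X"
    unfolding hhat_def by (metis Max_in cSup_eq_Max insert_not_empty)
  then show ?thesis using assms by auto
qed

lemma abstains_imp_le_sum_gated_hellinger:
  assumes "\<epsilon> \<ge> 0" "abstains M \<epsilon> \<delta> \<omega> n"
  shows "\<epsilon> \<le> (\<Sum>\<nu>\<in>M. gated_hellinger \<delta> \<nu> (stake n \<omega>))"
proof -
  obtain \<nu> where \<nu>: "\<nu> \<in> active M \<delta> \<omega> n" "hellinger (cyl \<nu>) (mix M) (stake n \<omega>) > \<epsilon>"
    using hhat_gt_imp_active_hellinger_gt[OF assms(1)] assms(2) unfolding abstains_def by blast
  then have "\<epsilon> \<le> gated_hellinger \<delta> \<nu> (stake n \<omega>)"
    by (auto simp: active_eq_plausible gated_hellinger_def)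
  also have "\<dots> \<le> (\<Sum>\<nu>\<in>M. gated_hellinger \<delta> \<nu> (stake n \<omega>))"
    using finite_M \<nu>(1) by (intro member_le_sum) (auto simp: active_def gated_hellinger_nonneg)
  finally show ?thesis .
qed

lemma fails_at_imp_eventually_implausible:
  assumes "\<mu> \<in> M" "fails_at M \<epsilon> \<delta> \<mu> \<omega> n"
  shows "\<exists>k. \<not> plausible \<delta> \<mu> (stake k \<omega>)"
proof (rule ccontr)
  assume "\<not> ?thesis"
  then have "\<mu> \<in> active M \<delta> \<omega> n" using assms(1) by (simp add: active_eq_plausible)
  then have "hellinger (mix M) (cyl \<mu>) (stake n \<omega>) \<le> hhat M \<delta> \<omega> n"
    using hellinger_le_hhat hellinger_commute by metis
  then show False using assms(2) by (simp add: fails_at_def abstains_def)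
qed

lemma card_bot_steps_lessThan_mult_le:
  fixes \<epsilon> :: real
  assumes "\<epsilon> \<ge> 0"
  shows "card (bot_steps M \<epsilon> \<delta> \<mu> \<omega> \<inter> {..<N}) * \<epsilon>
       \<le> (\<Sum>n<N. \<Sum>\<nu>\<in>M. gated_hellinger \<delta> \<nu> (stake n \<omega>))"
proof -
  let ?A = "bot_steps M \<epsilon> \<delta> \<mu> \<omega> \<inter> {..<N}"
  have "card ?A * \<epsilon> = (\<Sum>n\<in>?A. \<epsilon>)" by simp
  also have "\<dots> \<le> (\<Sum>n\<in>?A. \<Sum>\<nu>\<in>M. gated_hellinger \<delta> \<nu> (stake n \<omega>))"
    using abstains_imp_le_sum_gated_hellinger assms by (intro sum_mono) (simp add: bot_steps_def)
  also have "\<dots> \<le> (\<Sum>n<N. \<Sum>\<nu>\<in>M. gated_hellinger \<delta> \<nu> (stake n \<omega>))"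
    by (rule sum_mono2) (auto simp: sum_nonneg gated_hellinger_nonneg)
  finally show ?thesis .
qed

lemma total_gated_hellinger_ge_if_many_bot_steps:
  fixes \<epsilon> :: real
  assumes "\<epsilon> > 0" "\<not> (finite (bot_steps M \<epsilon> \<delta> \<mu> \<omega>) \<and> card (bot_steps M \<epsilon> \<delta> \<mu> \<omega>) \<le> B)"
  shows "ennreal (Suc B * \<epsilon>) \<le> (\<Sum>n. \<Sum>\<nu>\<in>M. ennreal (gated_hellinger \<delta> \<nu> (stake n \<omega>)))"
proof -
  obtain N where N: "Suc B \<le> card (bot_steps M \<epsilon> \<delta> \<mu> \<omega> \<inter> {..<N})"
    using assms(2) unfolding finite_card_le_iff_card_lessThan by (auto simp: not_le Suc_le_eq)
  have "Suc B * \<epsilon> \<le> card (bot_steps M \<epsilon> \<delta> \<mu> \<omega> \<inter> {..<N}) * \<epsilon>"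
    using N assms(1) by (intro mult_right_mono) auto
  also have "\<dots> \<le> (\<Sum>n<N. \<Sum>\<nu>\<in>M. gated_hellinger \<delta> \<nu> (stake n \<omega>))"
    using assms(1) by (intro card_bot_steps_lessThan_mult_le) simp
  finally have "ennreal (Suc B * \<epsilon>) \<le> (\<Sum>n<N. \<Sum>\<nu>\<in>M. ennreal (gated_hellinger \<delta> \<nu> (stake n \<omega>)))"
    by (simp add: ennreal_leI sum_nonneg gated_hellinger_nonneg)
  also have "\<dots> \<le> (\<Sum>n. \<Sum>\<nu>\<in>M. ennreal (gated_hellinger \<delta> \<nu> (stake n \<omega>)))"
    by (intro sum_le_suminf) auto
  finally show ?thesis .
qed

lemma measure_run_fails_le:
  assumes "\<mu> \<in> M" "\<delta> > 0"
  shows "{\<omega> \<in> space \<mu>. run_fails M \<epsilon> \<delta> \<mu> \<omega>} \<in> sets \<mu>"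
    and "measure \<mu> {\<omega> \<in> space \<mu>. run_fails M \<epsilon> \<delta> \<mu> \<omega>} \<le> \<delta>"
proof -
  interpret \<mu>: stream_prob_space \<mu> using stream_prob_space_M assms(1) .
  show "{\<omega> \<in> space \<mu>. run_fails M \<epsilon> \<delta> \<mu> \<omega>} \<in> sets \<mu>"
    by (rule \<mu>.sets_Collect_run_fails)
  moreover have "{\<omega>. \<exists>k. \<not> plausible \<delta> \<mu> (stake k \<omega>)} \<in> sets \<mu>"
    using sets.sets_Collect_countable_Ex[OF \<mu>.sets_Collect_stake] by simp
  moreover have "{\<omega> \<in> space \<mu>. run_fails M \<epsilon> \<delta> \<mu> \<omega>} \<subseteq> {\<omega>. \<exists>k. \<not> plausible \<delta> \<mu> (stake k \<omega>)}"
    using fails_at_imp_eventually_implausible[OF assms(1)] by (auto simp: run_fails_def)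
  ultimately have "emeasure \<mu> {\<omega> \<in> space \<mu>. run_fails M \<epsilon> \<delta> \<mu> \<omega>} \<le> \<delta>"
    using emeasure_eventually_implausible_le[OF assms] by (meson emeasure_mono order_trans)
  then show "measure \<mu> {\<omega> \<in> space \<mu>. run_fails M \<epsilon> \<delta> \<mu> \<omega>} \<le> \<delta>"
    using assms(2) by (simp add: \<mu>.emeasure_eq_measure)
qed

lemma nn_integral_total_gated_hellinger_le:
  assumes "\<mu> \<in> M" "\<delta> > 0"
  shows "(\<integral>\<^sup>+\<omega>. (\<Sum>n. \<Sum>\<nu>\<in>M. ennreal (gated_hellinger \<delta> \<nu> (stake n \<omega>))) \<partial>\<mu>)
       \<le> ennreal (2 * real (card M) ^ 2 / sqrt \<delta>)"
proof -
  interpret \<mu>: stream_prob_space \<mu> using stream_prob_space_M assms(1) .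
  have [measurable]: "(\<lambda>\<omega>. ennreal (gated_hellinger \<delta> \<nu> (stake n \<omega>))) \<in> borel_measurable \<mu>" for n \<nu>
    by (rule measurable_compose[OF \<mu>.measurable_stake_P]) simp
  have "(\<integral>\<^sup>+\<omega>. (\<Sum>n. \<Sum>\<nu>\<in>M. ennreal (gated_hellinger \<delta> \<nu> (stake n \<omega>))) \<partial>\<mu>)
      = (\<Sum>n. \<integral>\<^sup>+\<omega>. (\<Sum>\<nu>\<in>M. ennreal (gated_hellinger \<delta> \<nu> (stake n \<omega>))) \<partial>\<mu>)"
    by (rule nn_integral_suminf) measurable
  also have "\<dots> = (\<Sum>n. \<Sum>\<nu>\<in>M. \<integral>\<^sup>+\<omega>. ennreal (gated_hellinger \<delta> \<nu> (stake n \<omega>)) \<partial>\<mu>)"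
    by (subst nn_integral_sum) auto
  also have "\<dots> = (\<Sum>\<nu>\<in>M. \<Sum>n. \<integral>\<^sup>+\<omega>. ennreal (gated_hellinger \<delta> \<nu> (stake n \<omega>)) \<partial>\<mu>)"
    by (rule suminf_sum) simp
  also have "\<dots> \<le> (\<Sum>\<nu>\<in>M. ennreal (2 * real (card M) / sqrt \<delta>))"
    by (intro sum_mono suminf_nn_integral_gated_hellinger_le assms)
  also have "\<dots> = ennreal (2 * real (card M) ^ 2 / sqrt \<delta>)"
    using assms(2) by (simp add: ennreal_of_nat_eq_real_of_nat ennreal_mult[symmetric] power2_eq_square)
  finally show ?thesis .
qed

lemma measure_card_bot_steps_le_ge:
  assumes "\<mu> \<in> M" "\<epsilon> > 0" "\<delta> > 0"
    and B: "2 * real (card M) ^ 2 / (sqrt \<delta> * \<delta> * \<epsilon>) \<le> B"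
  defines "G \<equiv> {\<omega> \<in> space \<mu>. finite (bot_steps M \<epsilon> \<delta> \<mu> \<omega>) \<and> card (bot_steps M \<epsilon> \<delta> \<mu> \<omega>) \<le> B}"
  shows "G \<in> sets \<mu>" and "measure \<mu> G \<ge> 1 - \<delta>"
proof -
  interpret \<mu>: stream_prob_space \<mu> using stream_prob_space_M assms(1) .
  show G_sets: "G \<in> sets \<mu>"
    unfolding G_def by (rule \<mu>.sets_Collect_card_bot_steps_le)
  define U where "U \<omega> = (\<Sum>n. \<Sum>\<nu>\<in>M. ennreal (gated_hellinger \<delta> \<nu> (stake n \<omega>)))" for \<omega>
  have [measurable]: "(\<lambda>\<omega>. ennreal (gated_hellinger \<delta> \<nu> (stake n \<omega>))) \<in> borel_measurable \<mu>" for n \<nu>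
    by (rule measurable_compose[OF \<mu>.measurable_stake_P]) simp
  have U_measurable [measurable]: "U \<in> borel_measurable \<mu>"
    unfolding U_def by measurable
  define c where "c = 1 / (Suc B * \<epsilon>)"
  have "c * (2 * real (card M) ^ 2 / sqrt \<delta>)
      = 2 * real (card M) ^ 2 / (sqrt \<delta> * \<delta> * \<epsilon>) * (\<delta> / Suc B)"
    using assms(2,3) real_sqrt_gt_zero[of \<delta>] by (simp add: c_def field_simps del: of_nat_Suc)
  also have "\<dots> \<le> Suc B * (\<delta> / Suc B)"
    using B assms(3) by (intro mult_right_mono) auto
  also have "\<dots> = \<delta>" by simp
  finally have c_bound: "c * (2 * real (card M) ^ 2 / sqrt \<delta>) \<le> \<delta>" .
  have "space \<mu> - G \<subseteq> {\<omega>\<in>space \<mu>. 1 \<le> ennreal c * U \<omega>}"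
  proof
    fix \<omega> assume \<omega>: "\<omega> \<in> space \<mu> - G"
    have "1 = ennreal c * ennreal (Suc B * \<epsilon>)"
      using assms(2) by (simp add: c_def flip: ennreal_mult)
    also have "\<dots> \<le> ennreal c * U \<omega>"
      using \<omega> assms(2) unfolding U_def G_def
      by (intro mult_left_mono total_gated_hellinger_ge_if_many_bot_steps) auto
    finally show "\<omega> \<in> {\<omega>\<in>space \<mu>. 1 \<le> ennreal c * U \<omega>}" using \<omega> by simp
  qed
  then have "emeasure \<mu> (space \<mu> - G) \<le> emeasure \<mu> {\<omega>\<in>space \<mu>. 1 \<le> ennreal c * U \<omega>}"
    by (rule emeasure_mono) measurable
  also have "\<dots> \<le> ennreal c * (\<integral>\<^sup>+\<omega>. U \<omega> * indicator (space \<mu>) \<omega> \<partial>\<mu>)"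
    by (rule nn_integral_Markov_inequality) measurable
  also have "\<dots> \<le> ennreal c * ennreal (2 * real (card M) ^ 2 / sqrt \<delta>)"
    using nn_integral_total_gated_hellinger_le[OF assms(1,3)] by (intro mult_left_mono) (simp_all add: U_def)
  also have "\<dots> = ennreal (c * (2 * real (card M) ^ 2 / sqrt \<delta>))"
    using assms(2,3) by (intro ennreal_mult[symmetric]) (auto simp: c_def)
  also have "\<dots> \<le> ennreal \<delta>"
    using c_bound by (rule ennreal_leI)
  finally have "measure \<mu> (space \<mu> - G) \<le> \<delta>"
    using assms(3) by (simp add: \<mu>.emeasure_eq_measure)
  then show "measure \<mu> G \<ge> 1 - \<delta>" using \<mu>.prob_compl[OF G_sets] by simp
qed

end

theorem theorem9:
  fixes \<epsilon> \<delta> :: real and K :: nat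
  assumes "\<epsilon> > 0" and "\<delta> > 0"
  shows "\<exists>B::nat. \<forall>M :: ('a::countable) stream measure set.
    finite M \<and> card M = K \<and>
    (\<forall>\<nu>\<in>M. prob_space \<nu> \<and> sets \<nu> = sets (stream_space (count_space UNIV))) \<longrightarrow>
    (\<forall>\<mu>\<in>M.
       {\<omega> \<in> space \<mu>. run_fails M \<epsilon> \<delta> \<mu> \<omega>} \<in> sets \<mu> \<and>
       measure \<mu> {\<omega> \<in> space \<mu>. run_fails M \<epsilon> \<delta> \<mu> \<omega>} \<le> \<delta> \<and>
       {\<omega> \<in> space \<mu>. finite (bot_steps M \<epsilon> \<delta> \<mu> \<omega>) \<and> card (bot_steps M \<epsilon> \<delta> \<mu> \<omega>) \<le> B} \<in> sets \<mu> \<and>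
       measure \<mu> {\<omega> \<in> space \<mu>. finite (bot_steps M \<epsilon> \<delta> \<mu> \<omega>) \<and> card (bot_steps M \<epsilon> \<delta> \<mu> \<omega>) \<le> B} \<ge> 1 - \<delta>)"
proof (intro exI allI impI ballI)
  define B where "B = nat \<lceil>2 * real K ^ 2 / (sqrt \<delta> * \<delta> * \<epsilon>)\<rceil>"
  fix M :: "'a stream measure set" and \<mu>
  assume M: "finite M \<and> card M = K \<and>
      (\<forall>\<nu>\<in>M. prob_space \<nu> \<and> sets \<nu> = sets (stream_space (count_space UNIV)))"
    and \<mu>: "\<mu> \<in> M"
  interpret uniform_mixture M
    using M \<mu> by (auto simp: uniform_mixture_def stream_prob_space_def stream_prob_space_axioms_def)
  have "2 * real (card M) ^ 2 / (sqrt \<delta> * \<delta> * \<epsilon>) \<le> B"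
    using M unfolding B_def by (simp add: real_nat_ceiling_ge)
  with measure_run_fails_le[OF \<mu> assms(2)] measure_card_bot_steps_le_ge[OF \<mu> assms]
  show "{\<omega> \<in> space \<mu>. run_fails M \<epsilon> \<delta> \<mu> \<omega>} \<in> sets \<mu> \<and>
       measure \<mu> {\<omega> \<in> space \<mu>. run_fails M \<epsilon> \<delta> \<mu> \<omega>} \<le> \<delta> \<and>
       {\<omega> \<in> space \<mu>. finite (bot_steps M \<epsilon> \<delta> \<mu> \<omega>) \<and> card (bot_steps M \<epsilon> \<delta> \<mu> \<omega>) \<le> B} \<in> sets \<mu> \<and>
       measure \<mu> {\<omega> \<in> space \<mu>. finite (bot_steps M \<epsilon> \<delta> \<mu> \<omega>) \<and> card (bot_steps M \<epsilon> \<delta> \<mu> \<omega>) \<le> B} \<ge> 1 - \<delta>"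
    by simp
qed

end
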